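(* Let $d\geqslant2$ be an integer and let $\mu\in L^\infty(\mathbb{C})$ be supported on the unit disk. Then \[ \frac{1}{dz^{d-1}}\Big\{\mathcal C\mu(z^d)-\mathcal C\mu(0)\Big\}=\mathcal C\big((z^d)^*\mu\big)(z),\qquad z\in\mathbb{C}\setminus\{0\}. \]
   Context: $\mathcal C\mu(z)=\frac{1}{\pi}\int_{\mathbb{C}}\frac{\mu(\zeta)}{z-\zeta}\,dm(\zeta)$ is the Cauchy transform. For $f(z)=z^d$, the pullback is $(f^*\mu)(z)=\mu(f(z))\,\overline{f'(z)}/f'(z)$. *)

theory Defs
  imports "HOL-Analysis.Analysis"
begin

text \<open>Cauchy transform with respect to (complete) Lebesgue measure on the plane.
  The integrand's singularity at the single point z is a null set.\<close>
definition cauchy_transform :: "(complex \<Rightarrow> complex) \<Rightarrow> complex \<Rightarrow> complex" where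
  "cauchy_transform \<mu> z = (1 / of_real pi) * (LINT \<zeta>|lebesgue. \<mu> \<zeta> / (z - \<zeta>))"

definition pullback :: "(complex \<Rightarrow> complex) \<Rightarrow> (complex \<Rightarrow> complex) \<Rightarrow> complex \<Rightarrow> complex" where
  "pullback f \<mu> z = \<mu> (f z) * cnj (deriv f z) / deriv f z"

end

theory Submission
  imports Defs
begin

text \<open>On each sector \<open>2\<pi>k/d < arg \<zeta> \<le> 2\<pi>(k+1)/d\<close> the map \<open>\<zeta> \<mapsto> \<zeta>^d\<close> is a bijection onto
  \<open>\<complex> - {0}\<close>, whose inverse is the \<open>k\<close>-th branch \<open>\<rho>\<^sub>k\<close> of the \<open>d\<close>-th root.  Changing variables on
  every sector turns the Cauchy integral of \<open>(z^d)\<^sup>*\<mu>\<close> at \<open>z\<close> into the integral of \<open>\<mu>(w)\<close> against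
  \<open>\<Sum>\<^sub>k \<rho>\<^sub>k\<^sup>2 / (d\<^sup>2 w\<^sup>2 (z - \<rho>\<^sub>k))\<close>: the Jacobian \<open>|\<rho>\<^sub>k|\<^sup>2/(d |w|)\<^sup>2\<close> of the branch and the
  factor \<open>conj f'(\<rho>\<^sub>k) / f'(\<rho>\<^sub>k)\<close> of the pullback combine to \<open>\<rho>\<^sub>k\<^sup>2/(d\<^sup>2 w\<^sup>2)\<close>.  Averaging over the
  roots of unity, \<open>\<Sum>\<^sub>k \<rho>\<^sub>k\<^sup>2/(z - \<rho>\<^sub>k) = d z w/(z^d - w)\<close>, so the new kernel is
  \<open>(1/(d z\<^sup>d\<^sup>-\<^sup>1)) (1/(z^d - w) - 1/(0 - w))\<close>, which integrates against \<open>\<mu>\<close> to the left-hand side.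

  The sectors are parametrised by horizontal strips through \<open>exp\<close>, so that every change of
  variables is along an injective map on a measurable set.  All kernels are dominated by multiples
  of \<open>indicator (cball c r) w / |a - w|\<close>, which is integrable by the substitution \<open>w = a + \<zeta>\<^sup>2\<close>.\<close>

lemma lborel_preserving_imp_lebesgue_preserving:
  fixes T :: "'a::euclidean_space \<Rightarrow> 'b::euclidean_space"
  assumes T[measurable]: "T \<in> borel \<rightarrow>\<^sub>M borel" and eq: "distr lborel borel T = lborel"
  shows "T \<in> lebesgue \<rightarrow>\<^sub>M lebesgue" "distr lebesgue lebesgue T = lebesgue"
proof -
  have T': "T \<in> lborel \<rightarrow>\<^sub>M lborel" using T by simp
  have d: "distr lebesgue lborel T = lborel"
    using eq T' by (simp add: distr_completion cong: distr_cong)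
  have Tl: "T \<in> lebesgue \<rightarrow>\<^sub>M lborel"
    using T' measurable_completion by blast
  show "T \<in> lebesgue \<rightarrow>\<^sub>M lebesgue"
    by (rule completion.measurable_completion2[OF Tl]) (simp add: d)
  have "lebesgue = completion (distr lebesgue lborel T)" by (simp add: d)
  also have "\<dots> = distr lebesgue lebesgue T"
    by (subst completion.completion_distr_eq[OF Tl]) (simp_all add: d)
  finally show "distr lebesgue lebesgue T = lebesgue" by simp
qed

lemma integrable_compose_lebesgue_preserving:
  fixes f :: "'b::euclidean_space \<Rightarrow> 'c::{banach,second_countable_topology}"
  assumes T: "T \<in> lebesgue \<rightarrow>\<^sub>M lebesgue" and eq: "distr lebesgue lebesgue T = lebesgue"
    and f: "integrable lebesgue f"
  shows "integrable lebesgue (\<lambda>x. f (T x))"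
    and "integral\<^sup>L lebesgue (\<lambda>x. f (T x)) = integral\<^sup>L lebesgue f"
  using integrable_distr_eq[OF T borel_measurable_integrable[OF f]]
    integral_distr[OF T borel_measurable_integrable[OF f]] f
  by (simp_all add: eq)

lemma borel_measurable_ident_lebesgue [measurable]:
  "(\<lambda>x. x) \<in> borel_measurable (lebesgue :: 'a::euclidean_space measure)"
  by (rule measurable_completion) simp

lemma continuous_imp_borel_measurable_lebesgue:
  fixes f :: "'a::euclidean_space \<Rightarrow> 'b::euclidean_space"
  shows "continuous_on UNIV f \<Longrightarrow> f \<in> borel_measurable lebesgue"
  by (rule measurable_completion) (simp add: borel_measurable_continuous_onI)

lemma absolutely_integrable_UNIV_iff_integrable:
  "f absolutely_integrable_on UNIV \<longleftrightarrow> integrable lebesgue f"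
  by (simp add: set_integrable_def)

lemma absolutely_integrable_on_Compl_singleton_iff:
  fixes f :: "'a::euclidean_space \<Rightarrow> 'b::euclidean_space"
  shows "f absolutely_integrable_on (- {a}) \<longleftrightarrow> f absolutely_integrable_on UNIV"
  by (rule absolutely_integrable_spike_set_eq) (auto intro: negligible_subset[of "{a}"])

lemma integral_Compl_singleton:
  fixes f :: "'a::euclidean_space \<Rightarrow> 'b::banach"
  shows "integral (- {a}) f = integral UNIV f"
  by (rule integral_spike_set) (auto intro: negligible_subset[of "{a}"])

lemma integrable_essentially_bounded_mult:
  fixes f g :: "'a \<Rightarrow> 'b::{banach, real_normed_algebra, second_countable_topology}"
  assumes f: "f \<in> borel_measurable M" and bound: "AE x in M. norm (f x) \<le> B"
    and g: "integrable M g"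
  shows "integrable M (\<lambda>x. f x * g x)"
proof (rule Bochner_Integration.integrable_bound)
  show "integrable M (\<lambda>x. B * norm (g x))"
    using g by (intro integrable_mult_right integrable_norm)
  show "(\<lambda>x. f x * g x) \<in> borel_measurable M"
    using f borel_measurable_integrable[OF g] by measurable
  show "AE x in M. norm (f x * g x) \<le> norm (B * norm (g x))"
    using bound
  proof eventually_elim
    case (elim x)
    then have "norm (f x * g x) \<le> B * norm (g x)"
      by (meson norm_ge_zero norm_mult_ineq mult_right_mono order_trans)
    then show ?case by simp
  qed
qed

section \<open>Change of variables in the complex plane\<close>

text \<open>The library's change of variables formula lives on \<open>real^'n\<close>; the complex plane is
  transported there by the isometry \<open>z \<mapsto> (Re z, Im z)\<close>.\<close>

definition vec_of_complex :: "complex \<Rightarrow> real^2" where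
  "vec_of_complex z = vector [Re z, Im z]"

definition complex_of_vec :: "real^2 \<Rightarrow> complex" where
  "complex_of_vec x = Complex (x$1) (x$2)"

lemma vec_of_complex_nth [simp]: "vec_of_complex z $ 1 = Re z" "vec_of_complex z $ 2 = Im z"
  by (simp_all add: vec_of_complex_def)

lemma complex_of_vec_inverse [simp]: "complex_of_vec (vec_of_complex z) = z"
  by (simp add: complex_of_vec_def complex_eq_iff)

lemma vec_of_complex_inverse [simp]: "vec_of_complex (complex_of_vec x) = x"
  by (simp add: complex_of_vec_def vec_eq_iff forall_2)

lemma vec_of_complex_eq_iff [simp]: "vec_of_complex a = vec_of_complex b \<longleftrightarrow> a = b"
  by (metis complex_of_vec_inverse)

lemma vec_of_complex_image_iff: "x \<in> vec_of_complex ` A \<longleftrightarrow> complex_of_vec x \<in> A"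
  by (metis vec_of_complex_inverse image_iff complex_of_vec_inverse)

lemma bounded_linear_vec_of_complex: "bounded_linear vec_of_complex"
  by (rule linear_conv_bounded_linear[THEN iffD1], rule linearI) (simp_all add: vec_eq_iff forall_2)

lemma bounded_linear_complex_of_vec: "bounded_linear complex_of_vec"
  by (rule linear_conv_bounded_linear[THEN iffD1], rule linearI)
    (simp_all add: complex_of_vec_def complex_eq_iff)

lemma borel_measurable_complex_of_vec [measurable]: "complex_of_vec \<in> borel \<rightarrow>\<^sub>M borel"
  using bounded_linear_complex_of_vec borel_measurable_continuous_onI linear_continuous_on by blast

lemma borel_measurable_vec_of_complex [measurable]: "vec_of_complex \<in> borel \<rightarrow>\<^sub>M borel"
  using bounded_linear_vec_of_complex borel_measurable_continuous_onI linear_continuous_on by blast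

lemma distr_lborel_complex_of_vec: "distr lborel borel complex_of_vec = lborel"
proof (rule lborel_eqI[symmetric])
  fix l u :: complex
  assume le: "\<And>b. b \<in> Basis \<Longrightarrow> l \<bullet> b \<le> u \<bullet> b"
  then have "Re l \<le> Re u" "Im l \<le> Im u"
    using le[of 1] le[of \<i>] by (auto simp: Basis_complex_def)
  moreover have "complex_of_vec -` box l u = box (vec_of_complex l) (vec_of_complex u)"
    by (auto simp: mem_box Basis_complex_def complex_of_vec_def Basis_vec_def UNIV_2 inner_axis)
  ultimately show "emeasure (distr lborel borel complex_of_vec) (box l u) = (\<Prod>b\<in>Basis. (u - l) \<bullet> b)"
    by (simp add: emeasure_distr emeasure_lborel_box_eq Basis_vec_def UNIV_2 inner_axis
        Basis_complex_def ennreal_mult' prod.reindex inj_on_def axis_eq_axis mult.commute)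
qed simp

lemma distr_lborel_vec_of_complex: "distr lborel borel vec_of_complex = lborel"
proof -
  have "distr lborel borel vec_of_complex =
      distr (distr lborel borel complex_of_vec) borel vec_of_complex"
    by (simp add: distr_lborel_complex_of_vec)
  also have "\<dots> = distr lborel borel (vec_of_complex \<circ> complex_of_vec)"
    by (rule distr_distr) simp_all
  finally show ?thesis by (simp add: o_def distr_id2)
qed

lemma absolutely_integrable_vec_of_complex_iff:
  fixes F :: "complex \<Rightarrow> complex"
  shows "(\<lambda>x. vec_of_complex (F (complex_of_vec x))) absolutely_integrable_on (vec_of_complex ` A)
         \<longleftrightarrow> F absolutely_integrable_on A"
    and "F absolutely_integrable_on A \<Longrightarrow>
         integral (vec_of_complex ` A) (\<lambda>x. vec_of_complex (F (complex_of_vec x)))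
           = vec_of_complex (integral A F)"
proof -
  note v2c = lborel_preserving_imp_lebesgue_preserving
      [OF borel_measurable_complex_of_vec distr_lborel_complex_of_vec]
  note c2v = lborel_preserving_imp_lebesgue_preserving
      [OF borel_measurable_vec_of_complex distr_lborel_vec_of_complex]
  define K where "K y = indicator A y *\<^sub>R F y" for y
  have eq: "(\<lambda>x. indicator (vec_of_complex ` A) x *\<^sub>R vec_of_complex (F (complex_of_vec x)))
      = (\<lambda>x. vec_of_complex (K (complex_of_vec x)))"
    by (auto simp: K_def vec_of_complex_image_iff indicator_def fun_eq_iff
        linear_scale[OF bounded_linear.linear[OF bounded_linear_vec_of_complex]])
  have "integrable lebesgue (\<lambda>x. vec_of_complex (K (complex_of_vec x)))
      \<longleftrightarrow> integrable lebesgue (\<lambda>x. K (complex_of_vec x))"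
    using integrable_bounded_linear[OF bounded_linear_complex_of_vec, of lebesgue
        "\<lambda>x. vec_of_complex (K (complex_of_vec x))"]
      integrable_bounded_linear[OF bounded_linear_vec_of_complex]
    by auto
  also have "\<dots> \<longleftrightarrow> integrable lebesgue K"
    using integrable_compose_lebesgue_preserving(1)[OF v2c, of K]
      integrable_compose_lebesgue_preserving(1)[OF c2v, of "\<lambda>x. K (complex_of_vec x)"]
    by auto
  finally show iff: "(\<lambda>x. vec_of_complex (F (complex_of_vec x))) absolutely_integrable_on
      (vec_of_complex ` A) \<longleftrightarrow> F absolutely_integrable_on A"
    unfolding set_integrable_def eq by (simp add: K_def[abs_def])
  assume F: "F absolutely_integrable_on A"
  then have K: "integrable lebesgue K"
    by (simp add: set_integrable_def K_def[abs_def])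
  have "integral (vec_of_complex ` A) (\<lambda>x. vec_of_complex (F (complex_of_vec x)))
      = integral\<^sup>L lebesgue (\<lambda>x. vec_of_complex (K (complex_of_vec x)))"
    using set_lebesgue_integral_eq_integral(2)[OF iff[THEN iffD2, OF F]]
    by (simp add: set_lebesgue_integral_def eq)
  also have "\<dots> = vec_of_complex (integral\<^sup>L lebesgue K)"
    using integral_bounded_linear[OF bounded_linear_vec_of_complex
        integrable_compose_lebesgue_preserving(1)[OF v2c K]]
      integrable_compose_lebesgue_preserving(2)[OF v2c K]
    by simp
  also have "\<dots> = vec_of_complex (integral A F)"
    using set_lebesgue_integral_eq_integral(2)[OF F]
    by (simp add: set_lebesgue_integral_def K_def[abs_def])
  finally show "integral (vec_of_complex ` A) (\<lambda>x. vec_of_complex (F (complex_of_vec x)))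
      = vec_of_complex (integral A F)" .
qed

lemma det_matrix_complex_mult: "det (matrix (\<lambda>h. vec_of_complex (c * complex_of_vec h))) = (cmod c)\<^sup>2"
proof -
  have "complex_of_vec (axis 1 1) = 1" "complex_of_vec (axis 2 1) = \<i>"
    by (simp_all add: complex_of_vec_def axis_def complex_eq_iff)
  then show ?thesis
    by (simp add: det_2 matrix_def cmod_power2 flip: power2_eq_square)
qed

theorem has_absolute_integral_change_of_variables_complex:
  fixes F G :: "complex \<Rightarrow> complex"
  assumes S: "S \<in> sets lebesgue"
    and der: "\<And>x. x \<in> S \<Longrightarrow> (G has_field_derivative G' x) (at x within S)"
    and inj: "inj_on G S"
  shows "(\<lambda>x. (cmod (G' x))\<^sup>2 *\<^sub>R F (G x)) absolutely_integrable_on S \<and>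
           integral S (\<lambda>x. (cmod (G' x))\<^sup>2 *\<^sub>R F (G x)) = b
     \<longleftrightarrow> F absolutely_integrable_on (G ` S) \<and> integral (G ` S) F = b"
proof -
  define S' where "S' = vec_of_complex ` S"
  define g where "g x = vec_of_complex (G (complex_of_vec x))" for x
  define g' where "g' x h = vec_of_complex (G' (complex_of_vec x) * complex_of_vec h)" for x h
  define H where "H y = (cmod (G' y))\<^sup>2 *\<^sub>R F (G y)" for y
  have S': "S' \<in> sets lebesgue"
  proof -
    have "S' = complex_of_vec -` S" by (auto simp: S'_def vec_of_complex_image_iff)
    then show ?thesis
      using measurable_sets[OF lborel_preserving_imp_lebesgue_preserving(1)
          [OF borel_measurable_complex_of_vec distr_lborel_complex_of_vec] S] by simp
  qed
  have "(g has_derivative g' x) (at x within S')" if "x \<in> S'" for x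
  proof -
    have "complex_of_vec ` S' = S" by (force simp: S'_def image_image)
    with that der[of "complex_of_vec x"]
    have "(G has_derivative (\<lambda>h. G' (complex_of_vec x) * h)) (at (complex_of_vec x) within complex_of_vec ` S')"
      by (auto simp: has_field_derivative_def)
    from bounded_linear.has_derivative[OF bounded_linear_vec_of_complex
        diff_chain_within[OF bounded_linear_imp_has_derivative[OF bounded_linear_complex_of_vec] this]]
    show ?thesis by (simp add: g_def[abs_def] g'_def[abs_def] o_def)
  qed
  moreover have "inj_on g S'"
    using inj by (auto simp: inj_on_def g_def S'_def)
  moreover have "\<bar>det (matrix (g' x))\<bar> *\<^sub>R vec_of_complex (F (complex_of_vec (g x)))
      = vec_of_complex (H (complex_of_vec x))" for x
    by (simp add: g'_def[abs_def] det_matrix_complex_mult g_def H_def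
        linear_scale[OF bounded_linear.linear[OF bounded_linear_vec_of_complex]])
  moreover have "g ` S' = vec_of_complex ` (G ` S)"
    by (auto simp: g_def S'_def image_image)
  ultimately have "(\<lambda>x. vec_of_complex (H (complex_of_vec x))) absolutely_integrable_on vec_of_complex ` S \<and>
       integral (vec_of_complex ` S) (\<lambda>x. vec_of_complex (H (complex_of_vec x))) = vec_of_complex b
     \<longleftrightarrow> (\<lambda>x. vec_of_complex (F (complex_of_vec x))) absolutely_integrable_on vec_of_complex ` (G ` S) \<and>
       integral (vec_of_complex ` (G ` S)) (\<lambda>x. vec_of_complex (F (complex_of_vec x))) = vec_of_complex b"
    using has_absolute_integral_change_of_variables
        [OF S', of g g' "\<lambda>y. vec_of_complex (F (complex_of_vec y))" "vec_of_complex b"]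
    by (simp add: S'_def)
  then show ?thesis
    using absolutely_integrable_vec_of_complex_iff[where F=H and A=S]
      absolutely_integrable_vec_of_complex_iff[where F=F and A="G ` S"]
    by (auto simp: H_def[abs_def])
qed

section \<open>Strips and branches of the \<open>d\<close>-th root\<close>

definition strip :: "real \<Rightarrow> real \<Rightarrow> complex set" where
  "strip a b = {u. Im u \<in> {a<..b}}"

lemma strip_sets_lebesgue [measurable]: "strip a b \<in> sets lebesgue"
proof -
  have "strip a b = {u. a < Im u} \<inter> {u. Im u \<le> b}" by (auto simp: strip_def)
  then show ?thesis
    by (simp add: open_halfspace_Im_gt closed_halfspace_Im_le borel_open borel_closed)
qed

lemma UN_strip:
  fixes n :: nat
  assumes "h \<ge> 0"
  shows "(\<Union>k<n. strip (a + real k * h) (a + real (k + 1) * h)) = strip a (a + real n * h)"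
proof (induction n)
  case (Suc n)
  have "{a<..a + n * h} \<union> {a + n * h<..a + (n + 1) * h} = {a<..a + (n + 1) * h}"
    using assms by (intro ivl_disj_un) (auto simp: algebra_simps)
  with Suc show ?case
    by (auto simp: lessThan_Suc strip_def)
qed (simp add: strip_def)

lemma strip_disjoint:
  fixes i j :: nat
  assumes "h \<ge> 0" "i \<noteq> j"
  shows "strip (a + real i * h) (a + real (i + 1) * h) \<inter> strip (a + real j * h) (a + real (j + 1) * h) = {}"
proof -
  have "a + real (i + 1) * h \<le> a + real j * h" if "i < j" for i j :: nat
    using that assms(1) by (intro add_left_mono mult_right_mono) auto
  then show ?thesis
    using assms(2) by (cases i j rule: linorder_cases) (force simp: strip_def)+
qed

text \<open>The branch of the logarithm with imaginary part in \<open>(0, 2\<pi>]\<close>.\<close>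

definition Ln_2pi :: "complex \<Rightarrow> complex" where
  "Ln_2pi w = Ln (- w) + \<i> * pi"

lemma exp_Ln_2pi: "w \<noteq> 0 \<Longrightarrow> exp (Ln_2pi w) = w"
  by (simp add: Ln_2pi_def exp_add)

lemma Ln_2pi_in_strip: "w \<noteq> 0 \<Longrightarrow> Ln_2pi w \<in> strip 0 (2 * pi)"
  using mpi_less_Im_Ln[of "- w"] Im_Ln_le_pi[of "- w"] by (simp add: Ln_2pi_def strip_def)

lemma Ln_2pi_exp: "u \<in> strip 0 (2 * pi) \<Longrightarrow> Ln_2pi (exp u) = u"
proof -
  assume u: "u \<in> strip 0 (2 * pi)"
  have "- exp u = exp (u - \<i> * pi)" by (simp add: exp_diff)
  moreover have "Ln (exp (u - \<i> * pi)) = u - \<i> * pi"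
    using u by (intro Ln_exp) (auto simp: strip_def)
  ultimately show ?thesis by (simp add: Ln_2pi_def)
qed

lemma bij_betw_exp_strip: "bij_betw exp (strip 0 (2 * pi)) (- {0})"
  by (rule bij_betw_byWitness[where f'=Ln_2pi])
    (auto simp: Ln_2pi_exp exp_Ln_2pi intro: Ln_2pi_in_strip)

text \<open>The \<open>d\<close>-th root of \<open>w\<close> with argument in \<open>(2\<pi>k/d, 2\<pi>(k+1)/d]\<close>.\<close>

definition root_branch :: "nat \<Rightarrow> nat \<Rightarrow> complex \<Rightarrow> complex" where
  "root_branch d k w = exp (2 * of_real pi * \<i> * of_nat k / of_nat d) * exp (Ln_2pi w / of_nat d)"

lemma root_branch_nonzero [simp]: "root_branch d k w \<noteq> 0"
  by (simp add: root_branch_def)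

lemma root_branch_pow:
  assumes "d > 0" "w \<noteq> 0"
  shows "root_branch d k w ^ d = w"
proof -
  have "exp (Ln_2pi w / of_nat d) ^ d = exp (Ln_2pi w)"
    using assms(1) by (simp flip: exp_of_nat_mult)
  then show ?thesis
    using assms complex_root_unity[of d k] by (simp add: root_branch_def power_mult_distrib exp_Ln_2pi)
qed

definition root_strip :: "nat \<Rightarrow> nat \<Rightarrow> complex set" where
  "root_strip d k = strip (2 * pi * k / d) (2 * pi * (k + 1) / d)"

lemma UN_root_strip: "d > 0 \<Longrightarrow> (\<Union>k<d. root_strip d k) = strip 0 (2 * pi)"
  using UN_strip[where h="2 * pi / d" and a=0 and n=d] by (simp add: root_strip_def mult_ac)

lemma root_strip_disjoint: "i \<noteq> j \<Longrightarrow> root_strip d i \<inter> root_strip d j = {}"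
  using strip_disjoint[where h="2 * pi / d" and a=0] by (simp add: root_strip_def mult_ac)

lemma Ln_2pi_exp_mult:
  assumes d: "d > 0" and u: "u \<in> root_strip d k"
  shows "Ln_2pi (exp (of_nat d * u)) = of_nat d * u - 2 * of_real pi * \<i> * of_nat k"
proof -
  define v where "v = of_nat d * u - 2 * of_real pi * \<i> * of_nat k"
  have "v \<in> strip 0 (2 * pi)"
    using u d by (auto simp: root_strip_def strip_def v_def field_simps)
  moreover have "exp v = exp (of_nat d * u)"
    by (simp add: v_def exp_diff mult_ac)
  ultimately show ?thesis
    by (metis Ln_2pi_exp v_def)
qed

lemma root_branch_exp_mult:
  assumes "d > 0" "u \<in> root_strip d k"
  shows "root_branch d k (exp (of_nat d * u)) = exp u"
proof -
  have "2 * of_real pi * \<i> * of_nat k / of_nat d + (of_nat d * u - 2 * of_real pi * \<i> * of_nat k) / of_nat d = u"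
    using assms(1) by (simp add: field_simps)
  then show ?thesis
    using assms by (simp add: root_branch_def Ln_2pi_exp_mult flip: exp_add)
qed

lemma bij_betw_exp_mult_root_strip:
  assumes d: "d > 0"
  shows "bij_betw (\<lambda>u. exp (of_nat d * u)) (root_strip d k) (- {0})"
proof (rule bij_betw_byWitness[where f'="\<lambda>w. (Ln_2pi w + 2 * of_real pi * \<i> * of_nat k) / of_nat d"])
  show "\<forall>u \<in> root_strip d k. (Ln_2pi (exp (of_nat d * u)) + 2 * of_real pi * \<i> * of_nat k) / of_nat d = u"
    using d by (simp add: Ln_2pi_exp_mult)
  show "\<forall>w \<in> - {0}. exp (of_nat d * ((Ln_2pi w + 2 * of_real pi * \<i> * of_nat k) / of_nat d)) = w"
    using d by (simp add: exp_add exp_Ln_2pi mult_ac)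
  show "(\<lambda>w. (Ln_2pi w + 2 * of_real pi * \<i> * of_nat k) / of_nat d) ` (- {0}) \<subseteq> root_strip d k"
  proof (rule image_subsetI)
    fix w :: complex assume "w \<in> - {0}"
    then have "0 < Im (Ln_2pi w)" "Im (Ln_2pi w) \<le> 2 * pi"
      using Ln_2pi_in_strip[of w] by (auto simp: strip_def)
    then show "(Ln_2pi w + 2 * of_real pi * \<i> * of_nat k) / of_nat d \<in> root_strip d k"
      using d by (simp add: root_strip_def strip_def Im_divide_of_nat divide_strict_right_mono
          divide_right_mono algebra_simps)
  qed
qed auto

section \<open>Change of variables along \<open>\<zeta> \<mapsto> \<zeta>^d\<close>\<close>

text \<open>The pullback of the density \<open>F\<close> along the branch \<open>root_branch d k\<close>, whose Jacobian is
  \<open>|\<rho>|\<^sup>2/(d |w|)\<^sup>2\<close> for \<open>\<rho>\<^sup>d = w\<close>.\<close>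

definition root_branch_pullback :: "nat \<Rightarrow> nat \<Rightarrow> (complex \<Rightarrow> complex) \<Rightarrow> complex \<Rightarrow> complex" where
  "root_branch_pullback d k F w = (cmod (root_branch d k w) / (d * cmod w))\<^sup>2 *\<^sub>R F (root_branch d k w)"

lemma has_absolute_integral_exp_strip:
  fixes F :: "complex \<Rightarrow> complex"
  shows "(\<lambda>u. (cmod (exp u))\<^sup>2 *\<^sub>R F (exp u)) absolutely_integrable_on strip 0 (2 * pi) \<and>
           integral (strip 0 (2 * pi)) (\<lambda>u. (cmod (exp u))\<^sup>2 *\<^sub>R F (exp u)) = b
     \<longleftrightarrow> F absolutely_integrable_on (- {0}) \<and> integral (- {0}) F = b"
  using has_absolute_integral_change_of_variables_complex[of "strip 0 (2 * pi)" exp exp F b]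
    bij_betw_exp_strip
  by (simp add: bij_betw_def field_differentiable_within_exp DERIV_exp[THEN has_field_derivative_at_within])

lemma has_absolute_integral_root_branch_pullback:
  fixes F :: "complex \<Rightarrow> complex"
  assumes d: "d > 0"
  shows "(\<lambda>u. (cmod (exp u))\<^sup>2 *\<^sub>R F (exp u)) absolutely_integrable_on root_strip d k \<and>
           integral (root_strip d k) (\<lambda>u. (cmod (exp u))\<^sup>2 *\<^sub>R F (exp u)) = b
     \<longleftrightarrow> root_branch_pullback d k F absolutely_integrable_on (- {0}) \<and>
         integral (- {0}) (root_branch_pullback d k F) = b"
proof -
  let ?G = "\<lambda>u. exp (of_nat d * u)" and ?G' = "\<lambda>u. of_nat d * exp (of_nat d * u)"
  let ?H = "\<lambda>u. (cmod (exp u))\<^sup>2 *\<^sub>R F (exp u)"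
  have "(cmod (?G' u))\<^sup>2 *\<^sub>R root_branch_pullback d k F (?G u) = ?H u" if "u \<in> root_strip d k" for u
    unfolding root_branch_pullback_def root_branch_exp_mult[OF d that]
    using d by (simp add: norm_mult field_simps flip: exp_of_nat_mult)
  then have "?H absolutely_integrable_on root_strip d k \<and> integral (root_strip d k) ?H = b
      \<longleftrightarrow> (\<lambda>u. (cmod (?G' u))\<^sup>2 *\<^sub>R root_branch_pullback d k F (?G u)) absolutely_integrable_on root_strip d k
        \<and> integral (root_strip d k) (\<lambda>u. (cmod (?G' u))\<^sup>2 *\<^sub>R root_branch_pullback d k F (?G u)) = b"
    by (intro conj_cong set_integrable_cong integral_cong arg_cong[where f="\<lambda>x. x = b"]) auto
  also have "\<dots> \<longleftrightarrow> root_branch_pullback d k F absolutely_integrable_on (- {0}) \<and>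
         integral (- {0}) (root_branch_pullback d k F) = b"
  proof -
    have "root_strip d k \<in> sets lebesgue" by (simp add: root_strip_def)
    moreover have "(?G has_field_derivative ?G' u) (at u within root_strip d k)" for u
      by (auto intro!: derivative_eq_intros)
    ultimately show ?thesis
      using has_absolute_integral_change_of_variables_complex[of "root_strip d k" ?G ?G']
        bij_betw_exp_mult_root_strip[OF d, of k]
      by (simp add: bij_betw_def)
  qed
  finally show ?thesis .
qed

lemma absolutely_integrable_on_strip_iff_root_strips:
  fixes f :: "complex \<Rightarrow> 'b::euclidean_space"
  assumes "d > 0"
  shows "f absolutely_integrable_on strip 0 (2 * pi) \<longleftrightarrow> (\<forall>k<d. f absolutely_integrable_on root_strip d k)"
proof
  assume "f absolutely_integrable_on strip 0 (2 * pi)"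
  moreover have "root_strip d k \<subseteq> strip 0 (2 * pi)" if "k < d" for k
    using that UN_root_strip[OF assms] by blast
  ultimately show "\<forall>k<d. f absolutely_integrable_on root_strip d k"
    by (metis set_integrable_subset root_strip_def strip_sets_lebesgue)
next
  assume "\<forall>k<d. f absolutely_integrable_on root_strip d k"
  then have "f absolutely_integrable_on (\<Union>k<d. root_strip d k)"
    by (intro set_integrable_UN) (auto simp: root_strip_def)
  then show "f absolutely_integrable_on strip 0 (2 * pi)"
    by (simp add: UN_root_strip[OF assms])
qed

lemma integral_strip_sum_root_strips:
  fixes f :: "complex \<Rightarrow> 'b::euclidean_space"
  assumes "d > 0" "f absolutely_integrable_on strip 0 (2 * pi)"
  shows "integral (strip 0 (2 * pi)) f = (\<Sum>k<d. integral (root_strip d k) f)"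
proof -
  have "(f has_integral (\<Sum>k<d. integral (root_strip d k) f)) (\<Union>k<d. root_strip d k)"
  proof (rule has_integral_UN)
    show "(f has_integral integral (root_strip d k) f) (root_strip d k)" if "k \<in> {..<d}" for k
      using assms that absolutely_integrable_on_strip_iff_root_strips
      by (blast intro: integrable_integral set_lebesgue_integral_eq_integral(1))
  qed (auto simp: pairwise_def root_strip_disjoint)
  then show ?thesis
    by (simp add: UN_root_strip[OF assms(1)] integral_unique)
qed

theorem integrable_iff_root_branch_pullbacks:
  fixes F :: "complex \<Rightarrow> complex"
  assumes "d > 0"
  shows "integrable lebesgue F \<longleftrightarrow> (\<forall>k<d. integrable lebesgue (root_branch_pullback d k F))"
proof -
  let ?H = "\<lambda>u. (cmod (exp u))\<^sup>2 *\<^sub>R F (exp u)"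
  have "integrable lebesgue F \<longleftrightarrow> ?H absolutely_integrable_on strip 0 (2 * pi)"
    using has_absolute_integral_exp_strip[of F] absolutely_integrable_on_Compl_singleton_iff
    by (blast intro: absolutely_integrable_UNIV_iff_integrable[THEN iffD2]
        dest: absolutely_integrable_UNIV_iff_integrable[THEN iffD1])
  also have "\<dots> \<longleftrightarrow> (\<forall>k<d. ?H absolutely_integrable_on root_strip d k)"
    by (rule absolutely_integrable_on_strip_iff_root_strips[OF assms])
  also have "\<dots> \<longleftrightarrow> (\<forall>k<d. integrable lebesgue (root_branch_pullback d k F))"
    using has_absolute_integral_root_branch_pullback[OF assms, of _ F]
      absolutely_integrable_on_Compl_singleton_iff absolutely_integrable_UNIV_iff_integrable
    by blast
  finally show ?thesis .
qed

theorem integral_eq_sum_root_branch_pullbacks: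
  fixes F :: "complex \<Rightarrow> complex"
  assumes d: "d > 0" and F: "integrable lebesgue F"
  shows "integral\<^sup>L lebesgue F = (\<Sum>k<d. integral\<^sup>L lebesgue (root_branch_pullback d k F))"
proof -
  let ?H = "\<lambda>u. (cmod (exp u))\<^sup>2 *\<^sub>R F (exp u)"
  have "F absolutely_integrable_on (- {0})"
    using F absolutely_integrable_on_Compl_singleton_iff absolutely_integrable_UNIV_iff_integrable
    by blast
  then have H: "?H absolutely_integrable_on strip 0 (2 * pi)"
    and "integral UNIV F = integral (strip 0 (2 * pi)) ?H"
    using has_absolute_integral_exp_strip[of F "integral (- {0}) F"]
    by (simp_all add: integral_Compl_singleton)
  then have "integral\<^sup>L lebesgue F = integral (strip 0 (2 * pi)) ?H"
    using F by (simp add: integral_lebesgue)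
  also have "\<dots> = (\<Sum>k<d. integral (root_strip d k) ?H)"
    by (rule integral_strip_sum_root_strips[OF d H])
  also have "\<dots> = (\<Sum>k<d. integral\<^sup>L lebesgue (root_branch_pullback d k F))"
  proof (rule sum.cong)
    fix k assume "k \<in> {..<d}"
    then have "?H absolutely_integrable_on root_strip d k"
      using H absolutely_integrable_on_strip_iff_root_strips[OF d] by blast
    then have "root_branch_pullback d k F absolutely_integrable_on UNIV"
      and "integral (root_strip d k) ?H = integral UNIV (root_branch_pullback d k F)"
      using has_absolute_integral_root_branch_pullback[OF d, of k F "integral (root_strip d k) ?H"]
      by (simp_all add: integral_Compl_singleton absolutely_integrable_on_Compl_singleton_iff)
    then show "integral (root_strip d k) ?H = integral\<^sup>L lebesgue (root_branch_pullback d k F)"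
      by (simp add: integral_lebesgue absolutely_integrable_UNIV_iff_integrable)
  qed simp
  finally show ?thesis .
qed

section \<open>The pulled-back Cauchy kernel summed over the roots\<close>

lemma sum_roots_unity_power:
  assumes "d > 0"
  shows "(\<Sum>k<d. exp (2 * of_real pi * \<i> * of_nat k / of_nat d) ^ m) = (if d dvd m then of_nat d else 0)"
proof -
  define q where "q = exp (2 * of_real pi * \<i> * of_nat m / of_nat d)"
  have "exp (2 * of_real pi * \<i> * of_nat k / of_nat d) ^ m = q ^ k" for k
    by (simp add: q_def mult_ac flip: exp_of_nat_mult)
  moreover have "q = 1 \<longleftrightarrow> d dvd m"
    using assms complex_root_unity_eq_1[of d m] by (simp add: q_def)
  moreover have "q ^ d = 1"
    using assms complex_root_unity[of d m] by (simp add: q_def)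
  ultimately show ?thesis
    by (simp add: sum_gp_strict)
qed

lemma dvd_Suc_diff_iff:
  fixes d p :: nat
  assumes "d \<ge> 2" "p < d"
  shows "d dvd (d + 1 - p) \<longleftrightarrow> p = 1"
proof
  assume dvd: "d dvd (d + 1 - p)"
  show "p = 1"
  proof (rule ccontr)
    assume "p \<noteq> 1"
    then consider "p = 0" | "p \<ge> 2" by linarith
    then show False
    proof cases
      case 1
      then have "d dvd 1"
        using dvd dvd_add_right_iff[of d d 1] by simp
      then show False
        using assms(1) by simp
    next
      case 2
      then have "0 < d + 1 - p" "d + 1 - p < d"
        using assms by auto
      then show False
        using dvd by (meson nat_dvd_not_less)
    qed
  qed
qed simp

lemma square_div_diff_eq_sum:
  fixes \<zeta> z :: "'a::field"
  assumes "d > 0" "z ^ d \<noteq> \<zeta> ^ d"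
  shows "\<zeta>\<^sup>2 / (z - \<zeta>) = (\<Sum>p<d. z ^ p * \<zeta> ^ (d + 1 - p)) / (z ^ d - \<zeta> ^ d)"
proof -
  obtain n where n: "d = Suc n" using assms(1) by (cases d) auto
  define S where "S = (\<Sum>p<d. z ^ p * \<zeta> ^ (n - p))"
  have factor: "z ^ d - \<zeta> ^ d = (z - \<zeta>) * S"
    unfolding n S_def by (rule diff_power_eq_sum)
  have "\<zeta>\<^sup>2 * S = (\<Sum>p<d. z ^ p * \<zeta> ^ (d + 1 - p))"
    unfolding S_def sum_distrib_left
  proof (rule sum.cong)
    fix p assume "p \<in> {..<d}"
    then have "d + 1 - p = 2 + (n - p)" using n by auto
    then show "\<zeta>\<^sup>2 * (z ^ p * \<zeta> ^ (n - p)) = z ^ p * \<zeta> ^ (d + 1 - p)"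
      by (simp only: power_add mult_ac)
  qed simp
  moreover have "S \<noteq> 0"
    using factor assms(2) by auto
  then have "\<zeta>\<^sup>2 / (z - \<zeta>) = (\<zeta>\<^sup>2 * S) / ((z - \<zeta>) * S)"
    by simp
  ultimately show ?thesis
    by (simp only: factor)
qed

lemma sum_roots_square_div_diff:
  fixes \<rho> z w :: complex
  assumes d: "d \<ge> 2" and \<rho>: "\<rho> ^ d = w" and zw: "z ^ d \<noteq> w"
  defines "\<zeta> k \<equiv> exp (2 * of_real pi * \<i> * of_nat k / of_nat d) * \<rho>"
  shows "(\<Sum>k<d. (\<zeta> k)\<^sup>2 / (z - \<zeta> k)) = of_nat d * z * w / (z ^ d - w)"
proof -
  have d0: "d > 0" using d by simp
  have \<zeta>_pow: "\<zeta> k ^ d = w" for k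
    using complex_root_unity[of d k] d0
    by (simp add: \<zeta>_def power_mult_distrib \<rho>)
  have "(\<Sum>k<d. (\<zeta> k)\<^sup>2 / (z - \<zeta> k)) = (\<Sum>k<d. \<Sum>p<d. z ^ p * \<zeta> k ^ (d + 1 - p)) / (z ^ d - w)"
    using square_div_diff_eq_sum[OF d0, of z] zw by (simp add: \<zeta>_pow sum_divide_distrib)
  also have "\<dots> = (\<Sum>p<d. z ^ p * \<rho> ^ (d + 1 - p) *
      (\<Sum>k<d. exp (2 * of_real pi * \<i> * of_nat k / of_nat d) ^ (d + 1 - p))) / (z ^ d - w)"
    by (subst sum.swap) (simp add: \<zeta>_def power_mult_distrib sum_distrib_left mult_ac)
  txt \<open>Only the term \<open>p = 1\<close> survives the sum over the roots of unity.\<close>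
  also have "\<dots> = (\<Sum>p<d. if p = 1 then of_nat d * z * w else 0) / (z ^ d - w)"
    using dvd_Suc_diff_iff[OF d] \<rho> by (intro arg_cong2[where f="(/)"] sum.cong)
      (auto simp: sum_roots_unity_power[OF d0])
  also have "\<dots> = of_nat d * z * w / (z ^ d - w)"
    using d by simp
  finally show ?thesis .
qed

lemma deriv_power_complex: "deriv (\<lambda>w. w ^ d) \<zeta> = of_nat d * (\<zeta>::complex) ^ (d - 1)"
  by (rule DERIV_imp_deriv) (rule derivative_eq_intros refl | simp)+

lemma pullback_power: "pullback (\<lambda>w. w ^ d) \<nu> \<zeta> = \<nu> (\<zeta> ^ d) * cnj (of_nat d * \<zeta> ^ (d - 1)) / (of_nat d * \<zeta> ^ (d - 1))"
  by (simp add: pullback_def deriv_power_complex)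

lemma root_branch_pullback_cauchy_kernel:
  fixes k :: nat
  assumes d: "d > 0" and w: "w \<noteq> 0"
  defines "r \<equiv> root_branch d k w"
  shows "root_branch_pullback d k (\<lambda>\<zeta>. pullback (\<lambda>w. w ^ d) \<nu> \<zeta> / (z - \<zeta>)) w
       = \<nu> w * (r\<^sup>2 / (of_nat d ^ 2 * w\<^sup>2 * (z - r)))"
proof -
  define D where "D = (of_nat d :: complex)"
  define m where "m = d - 1"
  have r_pow: "r ^ d = w"
    using root_branch_pow[OF d w] by (simp add: r_def)
  have w_eq: "w = r * r ^ m"
    using r_pow d by (simp add: m_def flip: power_Suc)
  have "r \<noteq> 0" "D \<noteq> 0" "cnj D = D"
    using d by (simp_all add: r_def D_def)
  then have "r * cnj r / (D\<^sup>2 * ((r * r ^ m) * cnj (r * r ^ m))) * (cnj (D * r ^ m) / (D * r ^ m))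
      = r\<^sup>2 / (D\<^sup>2 * (r * r ^ m)\<^sup>2)"
    by (simp add: field_simps power2_eq_square)
  moreover have "complex_of_real ((cmod r / (real d * cmod w))\<^sup>2) = r * cnj r / (D\<^sup>2 * (w * cnj w))"
    by (simp add: D_def power_divide power_mult_distrib complex_norm_square[symmetric])
  moreover have "root_branch_pullback d k (\<lambda>\<zeta>. pullback (\<lambda>w. w ^ d) \<nu> \<zeta> / (z - \<zeta>)) w
      = complex_of_real ((cmod r / (real d * cmod w))\<^sup>2) * (cnj (D * r ^ m) / (D * r ^ m)) * \<nu> w / (z - r)"
    by (simp add: root_branch_pullback_def pullback_power scaleR_conv_of_real r_pow
        D_def m_def flip: r_def)
  ultimately show ?thesis
    unfolding w_eq by (simp add: D_def)
qed

lemma sum_root_branch_pullback_cauchy_kernel: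
  assumes d: "d \<ge> 2" and w: "w \<noteq> 0" and z: "z \<noteq> 0" and zw: "z ^ d \<noteq> w"
  shows "(\<Sum>k<d. root_branch_pullback d k (\<lambda>\<zeta>. pullback (\<lambda>w. w ^ d) \<nu> \<zeta> / (z - \<zeta>)) w)
       = 1 / (of_nat d * z ^ (d - 1)) * (\<nu> w / (z ^ d - w) - \<nu> w / (0 - w))"
proof -
  have d0: "d > 0" using d by simp
  define \<rho> where "\<rho> = root_branch d 0 w"
  have branch: "root_branch d k w = exp (2 * of_real pi * \<i> * of_nat k / of_nat d) * \<rho>" for k
    by (simp add: root_branch_def \<rho>_def)
  have "(\<Sum>k<d. root_branch_pullback d k (\<lambda>\<zeta>. pullback (\<lambda>w. w ^ d) \<nu> \<zeta> / (z - \<zeta>)) w)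
      = \<nu> w / (of_nat d ^ 2 * w\<^sup>2) * (\<Sum>k<d. (root_branch d k w)\<^sup>2 / (z - root_branch d k w))"
    by (simp add: root_branch_pullback_cauchy_kernel[OF d0 w] sum_distrib_left field_simps)
  also have "\<dots> = \<nu> w / (of_nat d ^ 2 * w\<^sup>2) * (of_nat d * z * w / (z ^ d - w))"
    unfolding branch using root_branch_pow[OF d0 w] zw
    by (simp add: sum_roots_square_div_diff[OF d] \<rho>_def)
  also have "\<dots> = 1 / (of_nat d * z ^ (d - 1)) * (\<nu> w / (z ^ d - w) - \<nu> w / (0 - w))"
  proof -
    have "v / (D\<^sup>2 * w\<^sup>2) * (D * z * w / (z * a - w)) = 1 / (D * a) * (v / (z * a - w) - v / (0 - w))"
      if "a \<noteq> 0" "D \<noteq> 0" "z * a - w \<noteq> 0" for v D a :: complex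
      using that w z by (simp add: field_simps power2_eq_square)
    moreover have "z ^ d = z * z ^ (d - 1)"
      using d0 by (simp flip: power_Suc)
    ultimately show ?thesis
      using z zw d0 by simp
  qed
  finally show ?thesis .
qed

section \<open>Integrability of the Cauchy kernels\<close>

lemma compact_square_preimage_cball: "compact {\<zeta>::complex. a + \<zeta>\<^sup>2 \<in> cball c r}"
  unfolding compact_eq_bounded_closed
proof
  show "closed {\<zeta>::complex. a + \<zeta>\<^sup>2 \<in> cball c r}"
    using closed_vimage[OF closed_cball, of "\<lambda>\<zeta>. a + \<zeta>\<^sup>2" c r]
    by (simp add: vimage_def continuous_intros)
  show "bounded {\<zeta>::complex. a + \<zeta>\<^sup>2 \<in> cball c r}"
  proof (rule boundedI)
    fix \<zeta> :: complex assume "\<zeta> \<in> {\<zeta>. a + \<zeta>\<^sup>2 \<in> cball c r}"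
    then have "cmod (\<zeta>\<^sup>2) \<le> r + dist c a"
      using norm_triangle_ineq4[of "a + \<zeta>\<^sup>2 - c" "a - c"]
      by (simp add: dist_norm norm_minus_commute algebra_simps)
    moreover have "0 \<le> (cmod \<zeta> - 1)\<^sup>2"
      by simp
    then have "cmod \<zeta> \<le> 1 + cmod \<zeta> ^ 2"
      using norm_ge_zero[of \<zeta>] by (simp add: power2_eq_square algebra_simps del: norm_ge_zero)
    ultimately show "cmod \<zeta> \<le> 1 + r + dist c a"
      by (simp add: norm_power)
  qed
qed

text \<open>The substitution \<open>w = a + \<zeta>\<^sup>2\<close> on the right half plane has Jacobian \<open>4\<bar>\<zeta>\<bar>\<^sup>2\<close>, which
  cancels the singularity \<open>1/\<bar>a - w\<bar> = 1/\<bar>\<zeta>\<bar>\<^sup>2\<close>.\<close>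

lemma integrable_indicator_cball_div_dist:
  "integrable lebesgue (\<lambda>w. indicator (cball c r) w / cmod (a - w))"
proof -
  define U where "U = {\<zeta>::complex. 0 < Re \<zeta>}"
  define G where "G \<zeta> = a + \<zeta>\<^sup>2" for \<zeta> :: complex
  define F where "F w = complex_of_real (indicator (cball c r) w / cmod (a - w))" for w
  define K where "K = {\<zeta>::complex. a + \<zeta>\<^sup>2 \<in> cball c r}"
  have U: "U \<in> sets lebesgue"
    unfolding U_def by (simp add: open_halfspace_Re_gt borel_open)
  have K: "K \<in> lmeasurable"
    unfolding K_def by (rule lmeasurable_compact[OF compact_square_preimage_cball])
  have "(G has_field_derivative 2 * \<zeta>) (at \<zeta> within U)" for \<zeta>
    unfolding G_def by (auto intro!: derivative_eq_intros)
  moreover have "inj_on G U"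
  proof (rule inj_onI)
    fix x y assume "x \<in> U" "y \<in> U" "G x = G y"
    then have "(x - y) * (x + y) = 0" "x + y \<noteq> 0"
      by (simp_all add: G_def algebra_simps power2_eq_square) (auto simp: U_def complex_eq_iff)
    then show "x = y" by simp
  qed
  moreover have "(\<lambda>\<zeta>. (cmod (2 * \<zeta>))\<^sup>2 *\<^sub>R F (G \<zeta>)) absolutely_integrable_on U"
  proof -
    have "(cmod (2 * \<zeta>))\<^sup>2 *\<^sub>R F (G \<zeta>) = complex_of_real (4 * indicator K \<zeta>)" if "\<zeta> \<in> U" for \<zeta>
    proof -
      have "cmod (a - G \<zeta>) = (cmod \<zeta>)\<^sup>2" "\<zeta> \<noteq> 0"
        using that by (auto simp: G_def U_def norm_power)
      then show ?thesis
        by (simp add: F_def K_def G_def indicator_def norm_mult scaleR_conv_of_real power_mult_distrib)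
    qed
    moreover have "integrable lebesgue (\<lambda>\<zeta>. 4 * indicator K \<zeta> :: real)"
      using K by (intro integrable_mult_right integrable_real_indicator) (auto simp: fmeasurable_def)
    then have "(\<lambda>\<zeta>. complex_of_real (4 * indicator K \<zeta>)) absolutely_integrable_on UNIV"
      by (simp only: set_integrable_def indicator_UNIV scaleR_one complex_of_real_integrable_eq)
    then have "(\<lambda>\<zeta>. complex_of_real (4 * indicator K \<zeta>)) absolutely_integrable_on U"
      using U by (rule set_integrable_subset) simp
    ultimately show ?thesis
      using set_integrable_cong[OF refl refl, of U "\<lambda>\<zeta>. (cmod (2 * \<zeta>))\<^sup>2 *\<^sub>R F (G \<zeta>)"] by simp
  qed
  ultimately have "F absolutely_integrable_on (G ` U)"
    using has_absolute_integral_change_of_variables_complex[OF U, of G "\<lambda>\<zeta>. 2 * \<zeta>" F] by blast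
  moreover have "UNIV - G ` U \<subseteq> {w. \<i> \<bullet> w = Im a}"
  proof
    fix w assume w: "w \<in> UNIV - G ` U"
    have "G (csqrt (w - a)) = w"
      by (simp add: G_def)
    then have "csqrt (w - a) \<notin> U"
      using w by (metis DiffD2 image_eqI)
    then have "Re (csqrt (w - a)) = 0"
      using Re_csqrt[of "w - a"] by (simp add: U_def)
    then have "Im (csqrt (w - a) ^ 2) = 0"
      by (simp add: power2_eq_square)
    then show "w \<in> {w. \<i> \<bullet> w = Im a}"
      by (simp add: inner_complex_def)
  qed
  then have "negligible {w \<in> UNIV - G ` U. F w \<noteq> 0}"
    by (intro negligible_subset[OF negligible_hyperplane[of \<i> "Im a"]]) auto
  ultimately have "F absolutely_integrable_on UNIV"
    using absolutely_integrable_spike_set_eq[of "G ` U" UNIV F] by auto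
  then show ?thesis
    by (simp only: F_def set_integrable_def indicator_UNIV scaleR_one complex_of_real_integrable_eq)
qed

lemma integrable_cauchy_kernel:
  fixes \<mu> :: "complex \<Rightarrow> complex"
  assumes \<mu>: "\<mu> \<in> borel_measurable lebesgue"
    and bound: "AE \<zeta> in lebesgue. norm (\<mu> \<zeta>) \<le> B"
    and supp: "AE \<zeta> in lebesgue. \<zeta> \<notin> cball c r \<longrightarrow> \<mu> \<zeta> = 0"
  shows "integrable lebesgue (\<lambda>w. \<mu> w / (a - w))"
proof (rule Bochner_Integration.integrable_bound)
  show "integrable lebesgue (\<lambda>w. \<bar>B\<bar> * (indicator (cball c r) w / cmod (a - w)))"
    by (intro integrable_mult_right integrable_indicator_cball_div_dist)
  show "(\<lambda>w. \<mu> w / (a - w)) \<in> borel_measurable lebesgue"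
    using \<mu> by measurable
  show "AE w in lebesgue. norm (\<mu> w / (a - w)) \<le> norm (\<bar>B\<bar> * (indicator (cball c r) w / cmod (a - w)))"
    using bound supp
  proof eventually_elim
    case (elim w)
    then show ?case
      by (cases "w \<in> cball c r") (auto simp: norm_divide divide_right_mono)
  qed
qed

lemma integrable_pullback_indicator_kernel:
  assumes "d > 0"
  shows "integrable lebesgue
    (\<lambda>\<zeta>. pullback (\<lambda>w. w ^ d) (\<lambda>w. complex_of_real (indicator (cball 0 1) w)) \<zeta> / (z - \<zeta>))"
proof (rule Bochner_Integration.integrable_bound)
  show "integrable lebesgue (\<lambda>\<zeta>. indicator (cball 0 1) \<zeta> / cmod (z - \<zeta>))"
    by (rule integrable_indicator_cball_div_dist)
  have [measurable]: "cball (0::complex) 1 \<in> sets borel"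
      "(\<lambda>x::complex. cnj (of_nat d * x ^ (d - 1))) \<in> borel_measurable lebesgue"
      "(\<lambda>x::complex. of_nat d * x ^ (d - 1)) \<in> borel_measurable lebesgue"
      "(\<lambda>x::complex. z - x) \<in> borel_measurable lebesgue"
    by (auto intro!: continuous_imp_borel_measurable_lebesgue continuous_intros)
  show "(\<lambda>\<zeta>. pullback (\<lambda>w. w ^ d) (\<lambda>w. complex_of_real (indicator (cball 0 1) w)) \<zeta> / (z - \<zeta>))
      \<in> borel_measurable lebesgue"
    unfolding pullback_power by measurable
  show "AE \<zeta> in lebesgue. norm (pullback (\<lambda>w. w ^ d) (\<lambda>w. complex_of_real (indicator (cball 0 1) w)) \<zeta> / (z - \<zeta>))
      \<le> norm (indicator (cball 0 1) \<zeta> / cmod (z - \<zeta>))"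
  proof (rule AE_I2)
    fix \<zeta> :: complex
    define c where "c = of_nat d * \<zeta> ^ (d - 1)"
    have "norm (cnj c / c) \<le> 1"
      by (cases "c = 0") (simp_all add: norm_divide)
    moreover have "indicator (cball 0 1) (\<zeta> ^ d) = (indicator (cball 0 1) \<zeta> :: real)"
      using assms by (simp add: indicator_def norm_power power_le_one_iff)
    moreover have "pullback (\<lambda>w. w ^ d) (\<lambda>w. complex_of_real (indicator (cball 0 1) w)) \<zeta> / (z - \<zeta>)
        = complex_of_real (indicator (cball 0 1) (\<zeta> ^ d)) * (cnj c / c) / (z - \<zeta>)"
      by (simp add: pullback_power c_def)
    ultimately show "norm (pullback (\<lambda>w. w ^ d) (\<lambda>w. complex_of_real (indicator (cball 0 1) w)) \<zeta> / (z - \<zeta>))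
      \<le> norm (indicator (cball 0 1) \<zeta> / cmod (z - \<zeta>))"
      by (simp add: norm_divide norm_mult divide_right_mono mult_left_le)
  qed
qed

lemma integrable_pullback_cauchy_kernel:
  fixes \<mu> :: "complex \<Rightarrow> complex"
  assumes d: "d > 0" and \<mu>: "\<mu> \<in> borel_measurable lebesgue"
    and bound: "AE \<zeta> in lebesgue. norm (\<mu> \<zeta>) \<le> B"
    and supp: "AE \<zeta> in lebesgue. \<zeta> \<notin> cball 0 1 \<longrightarrow> \<mu> \<zeta> = 0"
  shows "integrable lebesgue (\<lambda>\<zeta>. pullback (\<lambda>w. w ^ d) \<mu> \<zeta> / (z - \<zeta>))"
proof -
  define K where "K \<nu> \<zeta> = pullback (\<lambda>w. w ^ d) \<nu> \<zeta> / (z - \<zeta>)" for \<nu> \<zeta>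
  define disk where "disk w = complex_of_real (indicator (cball 0 1) w)" for w :: complex
  txt \<open>An a.e. bound on \<open>\<mu>\<close> does not bound \<open>\<mu>(\<zeta>^d)\<close> a.e. without knowing that \<open>\<zeta>^d\<close> pulls null
    sets back to null sets, so \<open>\<mu>\<close> is compared with the indicator of the disc after the change of
    variables, branch by branch.\<close>
  have "integrable lebesgue (root_branch_pullback d k (K \<mu>))" if "k < d" for k
  proof -
    have disk_kernel: "integrable lebesgue (root_branch_pullback d k (K disk))"
      using integrable_iff_root_branch_pullbacks[OF d] integrable_pullback_indicator_kernel[OF d] that
      unfolding K_def disk_def by blast
    have "AE w in lebesgue. w \<noteq> 0"
      by (rule AE_completion) (rule AE_lborel_singleton)
    then have "AE w in lebesgue. \<mu> w * root_branch_pullback d k (K disk) w = root_branch_pullback d k (K \<mu>) w"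
      using supp
    proof eventually_elim
      case (elim w)
      then show ?case
        by (cases "w \<in> cball 0 1") (auto simp: K_def[abs_def] disk_def root_branch_pullback_cauchy_kernel[OF d])
    qed
    moreover have "integrable lebesgue (\<lambda>w. \<mu> w * root_branch_pullback d k (K disk) w)"
      by (rule integrable_essentially_bounded_mult[OF \<mu> bound disk_kernel])
    ultimately show ?thesis
      using borel_measurable_AE integrable_cong_AE_imp by (metis borel_measurable_integrable)
  qed
  then show ?thesis
    using integrable_iff_root_branch_pullbacks[OF d] unfolding K_def by blast
qed

lemma integral_pullback_cauchy_kernel:
  fixes \<mu> :: "complex \<Rightarrow> complex"
  assumes d: "d \<ge> 2" and \<mu>: "\<mu> \<in> borel_measurable lebesgue"
    and bound: "AE \<zeta> in lebesgue. norm (\<mu> \<zeta>) \<le> B"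
    and supp: "AE \<zeta> in lebesgue. \<zeta> \<notin> cball 0 1 \<longrightarrow> \<mu> \<zeta> = 0"
    and z: "z \<noteq> 0"
  shows "(LINT \<zeta>|lebesgue. pullback (\<lambda>w. w ^ d) \<mu> \<zeta> / (z - \<zeta>))
       = 1 / (of_nat d * z ^ (d - 1)) *
         ((LINT w|lebesgue. \<mu> w / (z ^ d - w)) - (LINT w|lebesgue. \<mu> w / (0 - w)))"
proof -
  have d0: "d > 0" using d by simp
  define K where "K \<zeta> = pullback (\<lambda>w. w ^ d) \<mu> \<zeta> / (z - \<zeta>)" for \<zeta>
  define c where "c = 1 / (of_nat d * z ^ (d - 1))"
  have kernel: "integrable lebesgue (\<lambda>w. \<mu> w / (a - w))" for a
    using integrable_cauchy_kernel[OF \<mu> bound supp] .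
  have K: "integrable lebesgue K"
    unfolding K_def using integrable_pullback_cauchy_kernel[OF d0 \<mu> bound supp] .
  then have branches: "integrable lebesgue (root_branch_pullback d k K)" if "k < d" for k
    using integrable_iff_root_branch_pullbacks[OF d0] that by blast
  have "AE w in lebesgue. w \<noteq> 0 \<and> w \<noteq> z ^ d"
    using AE_completion[OF AE_lborel_singleton] by (auto elim: AE_mp)
  then have fibre_sum: "AE w in lebesgue.
      (\<Sum>k<d. root_branch_pullback d k K w) = c * (\<mu> w / (z ^ d - w) - \<mu> w / (0 - w))"
    by eventually_elim
      (use sum_root_branch_pullback_cauchy_kernel[OF d _ z] in \<open>auto simp: K_def[abs_def] c_def\<close>)
  have "(LINT \<zeta>|lebesgue. K \<zeta>) = (\<Sum>k<d. LINT w|lebesgue. root_branch_pullback d k K w)"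
    by (rule integral_eq_sum_root_branch_pullbacks[OF d0 K])
  also have "\<dots> = (LINT w|lebesgue. (\<Sum>k<d. root_branch_pullback d k K w))"
    by (rule Bochner_Integration.integral_sum[symmetric]) (simp add: branches)
  also have "\<dots> = (LINT w|lebesgue. c * (\<mu> w / (z ^ d - w) - \<mu> w / (0 - w)))"
  proof (intro integral_cong_AE borel_measurable_integrable fibre_sum)
    show "integrable lebesgue (\<lambda>w. c * (\<mu> w / (z ^ d - w) - \<mu> w / (0 - w)))"
      by (rule integrable_mult_right, rule Bochner_Integration.integrable_diff[OF kernel kernel])
  qed (rule Bochner_Integration.integrable_sum, simp add: branches)
  also have "\<dots> = c * ((LINT w|lebesgue. \<mu> w / (z ^ d - w)) - (LINT w|lebesgue. \<mu> w / (0 - w)))"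
    by (simp only: integral_mult_right_zero Bochner_Integration.integral_diff[OF kernel kernel])
  finally show ?thesis
    unfolding K_def c_def .
qed

theorem lemma5p2:
  fixes d :: nat and \<mu> :: "complex \<Rightarrow> complex" and z :: complex
  assumes "d \<ge> 2"
    and "\<mu> \<in> borel_measurable lebesgue"
    and "\<exists>B. AE \<zeta> in lebesgue. norm (\<mu> \<zeta>) \<le> B"
    and "AE \<zeta> in lebesgue. \<zeta> \<notin> cball 0 1 \<longrightarrow> \<mu> \<zeta> = 0"
    and "z \<noteq> 0"
  shows "1 / (of_nat d * z ^ (d - 1)) * (cauchy_transform \<mu> (z ^ d) - cauchy_transform \<mu> 0)
         = cauchy_transform (pullback (\<lambda>w. w ^ d) \<mu>) z"
proof -
  obtain B where "AE \<zeta> in lebesgue. norm (\<mu> \<zeta>) \<le> B"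
    using assms(3) by blast
  from integral_pullback_cauchy_kernel[OF assms(1,2) this assms(4,5)]
  show ?thesis
    unfolding cauchy_transform_def by (simp add: algebra_simps)
qed

end
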